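(* Let $H$ be an infinite-dimensional separable complex Hilbert space with orthonormal basis $(e_i)_{i\in\mathbb{N}}$, and let $D=\sum_{i\in\mathbb{N}}\lambda_i\, e_i\otimes e_i$ be a bounded diagonal operator such that $\lambda_i\neq\lambda_j$ for all $i\neq j$ and such that $\sigma(D)$ is a perfect compact set. Then there exists a vector $u\in H$ such that (1) $\langle u,e_i\rangle\neq 0$ for all $i\in\mathbb{N}$, and (2) for all $z\in\sigma(D)\setminus\sigma_p(D)$, $$\sum_{i\in\mathbb{N}}\frac{|\langle u,e_i\rangle|^2}{|z-\lambda_i|^2}=\infty.$$
   Context: For $u,v\in H$, $u\otimes v$ denotes the operator $h\mapsto\langle h,v\rangle u$, so $De_i=\lambda_i e_i$. $\sigma(D)$ is the spectrum of $D$ (here the closure of $\{\lambda_i\}$) and $\sigma_p(D)=\{\lambda_i:i\in\mathbb{N}\}$ its set of eigenvalues. A set is perfect if it has no isolated points. *)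

theory Defs
  imports "HOL-Analysis.Analysis"
begin

text \<open>The separable infinite-dimensional Hilbert space H with orthonormal basis (e_i) is
  represented, via its coordinates u \<mapsto> (\<langle>u,e_i\<rangle>)_i, as the space of square-summable
  complex sequences (l^2(N)). The diagonal operator D is determined by its eigenvalue
  sequence lambda.\<close>

definition in_ell2 :: "(nat \<Rightarrow> complex) \<Rightarrow> bool" where
  "in_ell2 c \<longleftrightarrow> summable (\<lambda>i. (cmod (c i))\<^sup>2)"

definition diag_bounded :: "(nat \<Rightarrow> complex) \<Rightarrow> bool" where
  "diag_bounded lam \<longleftrightarrow> bounded (range lam)"

definition diag_spectrum :: "(nat \<Rightarrow> complex) \<Rightarrow> complex set" where
  "diag_spectrum lam = closure (range lam)"

definition diag_point_spectrum :: "(nat \<Rightarrow> complex) \<Rightarrow> complex set" where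
  "diag_point_spectrum lam = range lam"

definition perfect_set :: "'a::topological_space set \<Rightarrow> bool" where
  "perfect_set S \<longleftrightarrow> (\<forall>x\<in>S. x islimpt S)"

end

theory Submission
  imports Defs
begin

text \<open>For finitely supported probability weights \<open>w\<close> on the indices, call
  \<open>\<Sum>i. w i / \<bar>z - \<lambda>\<^sub>i\<bar>\<^sup>2\<close> the potential of \<open>w\<close> at \<open>z\<close>. It suffices to find, for every \<open>k\<close>,
  weights whose potential is at least \<open>2\<^sup>k\<close> at every point of
  \<open>\<sigma>(D) - \<sigma>\<^sub>p(D)\<close>: then \<open>|u\<^sub>i|\<^sup>2 = 2\<^sup>-\<^sup>i + \<Sum>\<^sub>k 2\<^sup>-\<^sup>k w\<^sub>k i\<close> does the job.
  Such weights come from a quadtree: on a square of half-side \<open>h\<close>, average the weights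
  built recursively on its four quadrants. A point of the square lies in one quadrant,
  where it inherits the potential \<open>J/(10h\<^sup>2)\<close> of depth \<open>J\<close>, and it is within distance
  \<open>5h\<close> of the support of the other three, which adds \<open>3/(25h\<^sup>2)\<close>; so every level of the
  quadtree raises the potential by a fixed multiple of \<open>1/h\<^sup>2\<close>.\<close>

definition square :: "complex \<Rightarrow> real \<Rightarrow> complex set" where
  "square c h = {z. \<bar>Re (z - c)\<bar> \<le> h \<and> \<bar>Im (z - c)\<bar> \<le> h}"

definition quadrant_centre :: "complex \<Rightarrow> real \<Rightarrow> bool \<times> bool \<Rightarrow> complex" where
  "quadrant_centre c h q =
     c + Complex (if fst q then h/2 else -h/2) (if snd q then h/2 else -h/2)"

lemma norm_diff_le_in_square: "z \<in> square c h \<Longrightarrow> cmod (z - c) \<le> 2*h"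
  unfolding square_def using cmod_le[of "z - c"] by auto

lemma norm_quadrant_centre_diff: "h \<ge> 0 \<Longrightarrow> cmod (quadrant_centre c h q - c) \<le> h"
  unfolding quadrant_centre_def
  using cmod_le[of "Complex (if fst q then h/2 else -h/2) (if snd q then h/2 else -h/2)"]
  by auto

lemma square_covered_by_quadrants:
  assumes "z \<in> square c h"
  obtains q where "z \<in> square (quadrant_centre c h q) (h/2)"
proof
  show "z \<in> square (quadrant_centre c h (Re (z - c) \<ge> 0, Im (z - c) \<ge> 0)) (h/2)"
    using assms unfolding square_def quadrant_centre_def by (auto simp: abs_if)
qed

definition prob_weights :: "nat set \<Rightarrow> (nat \<Rightarrow> real) \<Rightarrow> bool" where
  "prob_weights A w \<longleftrightarrow> finite A \<and> (\<forall>i. 0 \<le> w i) \<and> (\<forall>i. i \<notin> A \<longrightarrow> w i = 0) \<and> sum w A = 1"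

definition potential :: "(nat \<Rightarrow> complex) \<Rightarrow> nat set \<Rightarrow> (nat \<Rightarrow> real) \<Rightarrow> complex \<Rightarrow> real" where
  "potential lam A w z = (\<Sum>i\<in>A. w i / (cmod (z - lam i))\<^sup>2)"

lemma prob_weights_sum_superset:
  assumes "prob_weights A w" "finite B" "A \<subseteq> B" "\<And>i. w i = 0 \<Longrightarrow> g i = 0"
  shows "sum g B = sum g A"
  using assms unfolding prob_weights_def by (intro sum.mono_neutral_right) auto

lemma prob_weights_sum_le_one:
  assumes "prob_weights A w" "finite B"
  shows "sum w B \<le> 1"
proof -
  have "sum w B \<le> sum w (B \<union> A)"
    using assms unfolding prob_weights_def by (intro sum_mono2) auto
  also have "\<dots> = 1"
    using assms by (subst prob_weights_sum_superset[OF assms(1)]) (auto simp: prob_weights_def)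
  finally show ?thesis .
qed

lemma prob_weights_average:
  fixes Q :: "'q set"
  assumes "finite Q" "Q \<noteq> {}" and weights: "\<And>q. q \<in> Q \<Longrightarrow> prob_weights (A q) (w q)"
  defines "v \<equiv> \<lambda>i. (\<Sum>q\<in>Q. w q i) / card Q"
  shows "prob_weights (\<Union>q\<in>Q. A q) v"
    and "potential lam (\<Union>q\<in>Q. A q) v z = (\<Sum>q\<in>Q. potential lam (A q) (w q) z) / card Q"
proof -
  let ?U = "\<Union>q\<in>Q. A q"
  have finU: "finite ?U" using assms(1) weights by (auto simp: prob_weights_def)
  have restrict: "(\<Sum>i\<in>?U. g q i) = (\<Sum>i\<in>A q. g q i)"
    if "q \<in> Q" "\<And>i. w q i = 0 \<Longrightarrow> g q i = 0" for q g
    using prob_weights_sum_superset[OF weights[OF that(1)] finU] that by blast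
  have "(\<Sum>i\<in>?U. v i) = (\<Sum>q\<in>Q. \<Sum>i\<in>A q. w q i) / card Q"
    unfolding v_def sum_divide_distrib[symmetric] sum.swap[of _ Q] using restrict[of _ w]
    by simp
  also have "\<dots> = 1" using assms(1,2) weights by (simp add: prob_weights_def)
  finally show "prob_weights ?U v"
    using finU weights unfolding v_def prob_weights_def
    by (fastforce intro!: sum_nonneg divide_nonneg_nonneg)
  have "potential lam ?U v z = (\<Sum>i\<in>?U. (\<Sum>q\<in>Q. w q i / (cmod (z - lam i))\<^sup>2) / card Q)"
    unfolding potential_def v_def
    by (intro sum.cong refl) (simp add: sum_divide_distrib[symmetric] divide_divide_eq_left ac_simps)
  also have "\<dots> = (\<Sum>q\<in>Q. \<Sum>i\<in>?U. w q i / (cmod (z - lam i))\<^sup>2) / card Q"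
    unfolding sum_divide_distrib by (rule sum.swap)
  also have "\<dots> = (\<Sum>q\<in>Q. potential lam (A q) (w q) z) / card Q"
    unfolding potential_def by (intro arg_cong2[where f="(/)"] sum.cong refl restrict) auto
  finally show "potential lam ?U v z = (\<Sum>q\<in>Q. potential lam (A q) (w q) z) / card Q" .
qed

lemma potential_ge_inverse_square:
  assumes "prob_weights A w" and "\<And>i. i \<in> A \<Longrightarrow> 0 < cmod (z - lam i) \<and> cmod (z - lam i) \<le> d"
  shows "1 / d\<^sup>2 \<le> potential lam A w z"
proof -
  have "1 / d\<^sup>2 = (\<Sum>i\<in>A. w i / d\<^sup>2)"
    using assms(1) by (simp add: prob_weights_def sum_divide_distrib[symmetric])
  also have "\<dots> \<le> potential lam A w z"
    unfolding potential_def
  proof (rule sum_mono)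
    fix i assume "i \<in> A"
    with assms(2) have pos: "0 < cmod (z - lam i)" and le: "cmod (z - lam i) \<le> d" by auto
    then have "(cmod (z - lam i))\<^sup>2 \<le> d\<^sup>2" by (intro power_mono) auto
    moreover have "0 < d\<^sup>2 * (cmod (z - lam i))\<^sup>2" using pos le by (intro mult_pos_pos) auto
    ultimately show "w i / d\<^sup>2 \<le> w i / (cmod (z - lam i))\<^sup>2"
      using assms(1) by (intro divide_left_mono) (auto simp: prob_weights_def)
  qed
  finally show ?thesis .
qed

lemma potential_ge_near_square:
  assumes "prob_weights A w" "\<And>i. i \<in> A \<Longrightarrow> cmod (lam i - c) \<le> 3*h"
    and "z \<in> square c h" "z \<notin> range lam"
  shows "1 / (5*h)\<^sup>2 \<le> potential lam A w z"
proof (rule potential_ge_inverse_square[OF assms(1)])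
  fix i assume "i \<in> A"
  have "cmod (z - lam i) \<le> cmod (z - c) + cmod (lam i - c)"
    using norm_triangle_ineq4[of "z - c" "lam i - c"] by simp
  then show "0 < cmod (z - lam i) \<and> cmod (z - lam i) \<le> 5*h"
    using assms(2)[OF \<open>i \<in> A\<close>] norm_diff_le_in_square[OF assms(3)] assms(4) by auto
qed

lemma point_mass_near_square:
  assumes "h > 0" "closure (range lam) \<inter> square c h \<noteq> {}"
  shows "\<exists>A w. prob_weights A w \<and> (\<forall>i\<in>A. cmod (lam i - c) \<le> 3*h)"
proof -
  obtain z where z: "z \<in> closure (range lam)" "z \<in> square c h" using assms(2) by blast
  then obtain i where i: "cmod (lam i - z) < h"
    using assms(1) by (metis closure_approachable dist_norm imageE)
  have "cmod (lam i - c) \<le> cmod (lam i - z) + cmod (z - c)"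
    using norm_triangle_ineq[of "lam i - z" "z - c"] by simp
  then have "cmod (lam i - c) \<le> 3*h" using i norm_diff_le_in_square[OF z(2)] by simp
  then show ?thesis
    by (intro exI[of _ "{i}"] exI[of _ "\<lambda>j. if j = i then 1 else 0"]) (auto simp: prob_weights_def)
qed

lemma quadtree_weights:
  assumes "h > 0" "closure (range lam) \<inter> square c h \<noteq> {}"
  shows "\<exists>A w. prob_weights A w \<and> (\<forall>i\<in>A. cmod (lam i - c) \<le> 3*h) \<and>
    (\<forall>z \<in> closure (range lam) \<inter> square c h - range lam. real J / (40*h\<^sup>2) \<le> potential lam A w z)"
  using assms
proof (induction J arbitrary: c h)
  case 0
  then obtain A w where w: "prob_weights A w" "\<forall>i\<in>A. cmod (lam i - c) \<le> 3*h"
    using point_mass_near_square by blast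
  have "0 \<le> potential lam A w z" for z
    using w(1) unfolding potential_def prob_weights_def by (auto intro: sum_nonneg)
  then show ?case using w by auto
next
  case (Suc J)
  let ?S = "closure (range lam)" and ?Q = "\<lambda>q. square (quadrant_centre c h q) (h/2)"
  have "\<exists>A w. prob_weights A w \<and> (\<forall>i\<in>A. cmod (lam i - c) \<le> 3*h) \<and>
          (\<forall>z \<in> ?S \<inter> ?Q q - range lam. real J / (10*h\<^sup>2) \<le> potential lam A w z)" for q
  proof (cases "?S \<inter> ?Q q = {}")
    case True
    then show ?thesis using point_mass_near_square[OF Suc.prems] by blast
  next
    case False
    with Suc.IH[of "h/2" "quadrant_centre c h q"] Suc.prems(1) obtain A w
      where w: "prob_weights A w" "\<forall>i\<in>A. cmod (lam i - quadrant_centre c h q) \<le> 3*(h/2)"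
        and pot: "\<forall>z \<in> ?S \<inter> ?Q q - range lam. real J / (10*h\<^sup>2) \<le> potential lam A w z"
      by (auto simp: power_divide)
    have "cmod (lam i - c) \<le> 3*h" if "i \<in> A" for i
    proof -
      have "cmod (lam i - c) \<le> cmod (lam i - quadrant_centre c h q) + cmod (quadrant_centre c h q - c)"
        using norm_triangle_ineq[of "lam i - quadrant_centre c h q" "quadrant_centre c h q - c"] by simp
      also have "\<dots> \<le> 3*(h/2) + h"
        using w(2) that norm_quadrant_centre_diff[of h c q] Suc.prems(1) by (intro add_mono) auto
      finally show ?thesis using Suc.prems(1) by linarith
    qed
    then show ?thesis using w(1) pot by blast
  qed
  then obtain A w where w: "\<And>q. prob_weights (A q) (w q)" "\<And>q i. i \<in> A q \<Longrightarrow> cmod (lam i - c) \<le> 3*h"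
    and pot: "\<And>q z. z \<in> ?S \<inter> ?Q q - range lam \<Longrightarrow> real J / (10*h\<^sup>2) \<le> potential lam (A q) (w q) z"
    by metis
  define v where "v i = (\<Sum>q\<in>UNIV. w q i) / card (UNIV :: (bool \<times> bool) set)" for i
  have "real (Suc J) / (40*h\<^sup>2) \<le> potential lam (\<Union>q. A q) v z"
    if z: "z \<in> ?S \<inter> square c h - range lam" for z
  proof -
    obtain q0 where q0: "z \<in> ?Q q0" using square_covered_by_quadrants z by blast
    have "(\<Sum>q\<in>UNIV - {q0}. 1 / (5*h)\<^sup>2) \<le> (\<Sum>q\<in>UNIV - {q0}. potential lam (A q) (w q) z)"
      using z by (intro sum_mono potential_ge_near_square[OF w]) auto
    then have "real J / (10*h\<^sup>2) + 3 / (5*h)\<^sup>2 \<le>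
        potential lam (A q0) (w q0) z + (\<Sum>q\<in>UNIV - {q0}. potential lam (A q) (w q) z)"
      using pot[of z q0] z q0 by (simp add: card_Diff_singleton)
    also have "\<dots> = (\<Sum>q\<in>UNIV. potential lam (A q) (w q) z)"
      by (simp add: sum.remove)
    also have "\<dots> = 4 * potential lam (\<Union>q. A q) v z"
      using prob_weights_average(2)[of UNIV A w lam z] w(1) unfolding v_def by (simp add: mult.commute)
    finally show ?thesis using Suc.prems(1) by (simp add: field_simps power2_eq_square)
  qed
  moreover have "prob_weights (\<Union>q. A q) v"
    using prob_weights_average(1)[of UNIV A w] w(1) unfolding v_def by simp
  ultimately show ?case using w(2) by blast
qed

lemma prob_weights_le_one: "prob_weights A w \<Longrightarrow> w i \<le> 1"
  using prob_weights_sum_le_one[of A w "{i}"] by simp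

lemma summable_geometric_weights:
  assumes "\<And>k. prob_weights (A k) (w k)"
  shows "summable (\<lambda>k. (1/2::real)^k * w k i)"
  using assms prob_weights_le_one[OF assms]
  by (intro summable_comparison_test'[OF summable_geometric[of "1/2::real"], of 0])
    (auto simp: prob_weights_def mult_left_le)

lemma summable_geometric_mixture:
  assumes weights: "\<And>k. prob_weights (A k) (w k)"
  shows "summable (\<lambda>i. \<Sum>k. (1/2::real)^k * w k i)"
proof (rule summableI_nonneg_bounded[where x=2])
  note terms = summable_geometric_weights[OF weights]
  show "0 \<le> (\<Sum>k. (1/2::real)^k * w k i)" for i
    using weights terms by (intro suminf_nonneg) (auto simp: prob_weights_def)
  fix n
  have "(\<Sum>i<n. \<Sum>k. (1/2::real)^k * w k i) = (\<Sum>k. \<Sum>i<n. (1/2)^k * w k i)"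
    using suminf_sum[of "{..<n}" "\<lambda>i k. (1/2::real)^k * w k i"] terms by simp
  also have "\<dots> \<le> (\<Sum>k. (1/2::real)^k)"
  proof (rule suminf_le)
    show "(\<Sum>i<n. (1/2::real)^k * w k i) \<le> (1/2)^k" for k
      using prob_weights_sum_le_one[OF weights[of k], of "{..<n}"]
      by (simp add: sum_distrib_left[symmetric] mult_left_le)
  qed (use terms in \<open>auto intro: summable_sum\<close>)
  also have "\<dots> = 2" by (simp add: suminf_geometric)
  finally show "(\<Sum>i<n. \<Sum>k. (1/2::real)^k * w k i) \<le> 2" .
qed

lemma geometric_mixture_potential_ge:
  assumes weights: "\<And>k. prob_weights (A k) (w k)"
    and large: "\<And>k. 2^k \<le> potential lam (A k) (w k) z"
  shows "real K \<le> (\<Sum>i\<in>(\<Union>k<K. A k). (\<Sum>k. (1/2::real)^k * w k i) / (cmod (z - lam i))\<^sup>2)"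
proof -
  let ?B = "\<Union>k<K. A k" and ?d = "\<lambda>i. (cmod (z - lam i))\<^sup>2"
  have finB: "finite ?B" using weights by (auto simp: prob_weights_def)
  have "real K = (\<Sum>k<K. (1/2::real)^k * 2^k)" by (simp add: power_mult_distrib[symmetric])
  also have "\<dots> \<le> (\<Sum>k<K. (1/2)^k * potential lam (A k) (w k) z)"
    using large by (intro sum_mono mult_left_mono) auto
  also have "\<dots> = (\<Sum>k<K. \<Sum>i\<in>?B. (1/2)^k * w k i / ?d i)"
    unfolding potential_def
    by (rule sum.cong[OF refl], subst prob_weights_sum_superset[OF weights finB])
      (auto simp: sum_distrib_left)
  also have "\<dots> = (\<Sum>i\<in>?B. (\<Sum>k<K. (1/2)^k * w k i) / ?d i)"
    by (simp add: sum.swap[of _ "{..<K}"] sum_divide_distrib)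
  also have "\<dots> \<le> (\<Sum>i\<in>?B. (\<Sum>k. (1/2)^k * w k i) / ?d i)"
    using weights summable_geometric_weights[OF weights]
    by (intro sum_mono divide_right_mono sum_le_suminf) (auto simp: prob_weights_def)
  finally show ?thesis .
qed

lemma ell2_vector_from_weights:
  assumes weights: "\<And>k. prob_weights (A k) (w k)"
    and large: "\<And>k z. z \<in> T \<Longrightarrow> 2^k \<le> potential lam (A k) (w k) z"
  shows "\<exists>u. in_ell2 u \<and> (\<forall>i. u i \<noteq> 0) \<and>
           (\<forall>z\<in>T. \<not> summable (\<lambda>i. (cmod (u i))\<^sup>2 / (cmod (z - lam i))\<^sup>2))"
proof -
  define m where "m i = (\<Sum>k. (1/2::real)^k * w k i)" for i
  have m_nonneg: "0 \<le> m i" for i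
    unfolding m_def using weights summable_geometric_weights[OF weights]
    by (intro suminf_nonneg) (auto simp: prob_weights_def)
  define u where "u i = complex_of_real (sqrt ((1/2)^i + m i))" for i
  have norm_u: "(cmod (u i))\<^sup>2 = (1/2)^i + m i" for i
    unfolding u_def using m_nonneg[of i] by simp
  have "in_ell2 u"
    unfolding in_ell2_def norm_u m_def
    using summable_geometric[of "1/2::real"] summable_geometric_mixture[OF weights]
    by (intro summable_add) auto
  moreover have "u i \<noteq> 0" for i
  proof -
    have "0 < (1/2::real)^i + m i" using m_nonneg[of i] by (intro add_pos_nonneg) auto
    then show ?thesis using norm_u[of i] by auto
  qed
  moreover have "\<not> summable (\<lambda>i. (cmod (u i))\<^sup>2 / (cmod (z - lam i))\<^sup>2)" if "z \<in> T" for z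
  proof
    assume sum: "summable (\<lambda>i. (cmod (u i))\<^sup>2 / (cmod (z - lam i))\<^sup>2)"
    have "real K \<le> (\<Sum>i. (cmod (u i))\<^sup>2 / (cmod (z - lam i))\<^sup>2)" for K
    proof -
      let ?B = "\<Union>k<K. A k"
      have "real K \<le> (\<Sum>i\<in>?B. m i / (cmod (z - lam i))\<^sup>2)"
        unfolding m_def using geometric_mixture_potential_ge[OF weights large[OF that]] .
      also have "\<dots> \<le> (\<Sum>i\<in>?B. (cmod (u i))\<^sup>2 / (cmod (z - lam i))\<^sup>2)"
        unfolding norm_u by (intro sum_mono divide_right_mono) auto
      also have "\<dots> \<le> (\<Sum>i. (cmod (u i))\<^sup>2 / (cmod (z - lam i))\<^sup>2)"
        using sum weights by (intro sum_le_suminf) (auto simp: prob_weights_def)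
      finally show ?thesis .
    qed
    then show False by (meson not_le reals_Archimedean2)
  qed
  ultimately show ?thesis by blast
qed

lemma weights_with_large_potential:
  assumes "bounded (range lam)"
  shows "\<exists>A w. prob_weights A w \<and>
           (\<forall>z \<in> closure (range lam) - range lam. 2^k \<le> potential lam A w z)"
proof -
  let ?S = "closure (range lam)"
  obtain R where R: "R > 0" "\<And>z. z \<in> ?S \<Longrightarrow> cmod z \<le> R"
    using bounded_closure[OF assms] by (auto simp: bounded_pos)
  have S_in_square: "?S \<subseteq> square 0 R"
  proof
    fix z assume "z \<in> ?S"
    then show "z \<in> square 0 R"
      using R(2) abs_Re_le_cmod[of z] abs_Im_le_cmod[of z] unfolding square_def by fastforce
  qed
  define J where "J = nat \<lceil>40 * R\<^sup>2 * 2^k\<rceil>"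
  have bound: "2^k \<le> real J / (40 * R\<^sup>2)" using R(1) unfolding J_def by (simp add: field_simps)
  have "lam 0 \<in> ?S \<inter> square 0 R" using S_in_square closure_subset by blast
  then obtain A w where "prob_weights A w"
    and pot: "\<forall>z \<in> ?S \<inter> square 0 R - range lam. real J / (40 * R\<^sup>2) \<le> potential lam A w z"
    using quadtree_weights[OF R(1)] by blast
  moreover have "2^k \<le> potential lam A w z" if "z \<in> ?S - range lam" for z
  proof -
    have "z \<in> ?S \<inter> square 0 R - range lam" using that S_in_square by blast
    with pot have "real J / (40 * R\<^sup>2) \<le> potential lam A w z" by blast
    with bound show ?thesis by linarith
  qed
  ultimately show ?thesis by blast
qed

theorem proposition5:
  fixes lam :: "nat \<Rightarrow> complex"
  assumes "diag_bounded lam"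
    and "inj lam"
    and "perfect_set (diag_spectrum lam)"
    and "compact (diag_spectrum lam)"
  shows "\<exists>u. in_ell2 u \<and> (\<forall>i. u i \<noteq> 0) \<and>
           (\<forall>z \<in> diag_spectrum lam - diag_point_spectrum lam.
              \<not> summable (\<lambda>i. (cmod (u i))\<^sup>2 / (cmod (z - lam i))\<^sup>2))"
proof -
  obtain A w where "\<And>k. prob_weights (A k) (w k)"
    and "\<And>k z. z \<in> closure (range lam) - range lam \<Longrightarrow> 2^k \<le> potential lam (A k) (w k) z"
    using weights_with_large_potential assms(1) unfolding diag_bounded_def by metis
  from ell2_vector_from_weights[OF this] show ?thesis
    unfolding diag_spectrum_def diag_point_spectrum_def .
qed

end
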